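(* Let $n\ge1$, $q$ a prime power, and let $\mathcal{F}_1\neq\mathcal{F}_2$ be two coverings of $[n]$, neither of which contains a redundant basic set. Then the combinatorial metrics $d_{\mathcal{F}_1}$ and $d_{\mathcal{F}_2}$ on $\mathbb{F}_q^n$ are different.
   Context: A family $\mathcal{A}$ of subsets of $[n]$ is a covering of $X\subset[n]$ if $X\subset\bigcup_{A\in\mathcal{A}}A$. For a covering $\mathcal{F}$ of $[n]$ (elements called basic sets) and $x\in\mathbb{F}_q^n$ with $\mathrm{supp}(x)=\{i:x_i\neq0\}$, $\mathrm{wt}_{\mathcal{F}}(x)=\min\{|\mathcal{A}|:\mathcal{A}\subset\mathcal{F},\ \mathcal{A}\text{ covers }\mathrm{supp}(x)\}$ and $d_{\mathcal{F}}(x,y)=\mathrm{wt}_{\mathcal{F}}(x-y)$. A basic set $A\in\mathcal{F}$ is redundant if there is $B\in\mathcal{F}$ with $A\subsetneq B$. *)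

theory Defs
  imports Main
begin

text \<open>Vectors of F_q^n are modelled as functions nat => 'a vanishing outside [n] = {1..n}.\<close>

definition vecs :: "nat \<Rightarrow> (nat \<Rightarrow> 'a::zero) set" where
  "vecs n = {x. \<forall>i. i \<notin> {1..n} \<longrightarrow> x i = 0}"

definition supp :: "(nat \<Rightarrow> 'a::zero) \<Rightarrow> nat set" where
  "supp x = {i. x i \<noteq> 0}"

definition covers :: "nat set set \<Rightarrow> nat set \<Rightarrow> bool" where
  "covers \<A> X \<longleftrightarrow> X \<subseteq> \<Union>\<A>"

definition is_covering :: "nat \<Rightarrow> nat set set \<Rightarrow> bool" where
  "is_covering n \<F> \<longleftrightarrow> (\<forall>A\<in>\<F>. A \<subseteq> {1..n}) \<and> covers \<F> {1..n}"

definition redundant :: "nat set set \<Rightarrow> nat set \<Rightarrow> bool" where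
  "redundant \<F> A \<longleftrightarrow> A \<in> \<F> \<and> (\<exists>B\<in>\<F>. A \<subset> B)"

definition wtF :: "nat set set \<Rightarrow> (nat \<Rightarrow> 'a::zero) \<Rightarrow> nat" where
  "wtF \<F> x = (LEAST k. \<exists>\<A>. \<A> \<subseteq> \<F> \<and> covers \<A> (supp x) \<and> card \<A> = k)"

definition dF :: "nat set set \<Rightarrow> (nat \<Rightarrow> 'a::ab_group_add) \<Rightarrow> (nat \<Rightarrow> 'a) \<Rightarrow> nat" where
  "dF \<F> x y = wtF \<F> (\<lambda>i. x i - y i)"

end

theory Submission
  imports Defs "HOL-Library.Indicator_Function"
begin

text \<open>A nonempty vector has weight one exactly when its support lies in a single basic set.
  Hence the metric d_F, evaluated at indicator vectors of basic sets and 0, knows which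
  sets lie inside some basic set; without redundant sets the basic sets are the maximal
  ones among these, so d_F determines F.\<close>

lemma wtF_eq_1_iff:
  assumes "finite F" "supp x \<noteq> {}" "covers F (supp x)"
  shows "wtF F x = 1 \<longleftrightarrow> (\<exists>A\<in>F. supp x \<subseteq> A)"
proof -
  let ?P = "\<lambda>k. \<exists>\<A>. \<A> \<subseteq> F \<and> covers \<A> (supp x) \<and> card \<A> = k"
  have "?P (card F)"
    using assms(3) by blast
  then have "?P (wtF F x)"
    unfolding wtF_def by (rule LeastI)
  then obtain \<A> where \<A>: "\<A> \<subseteq> F" "covers \<A> (supp x)" "card \<A> = wtF F x"
    by blast
  show ?thesis
  proof
    assume "wtF F x = 1"
    then obtain A where "\<A> = {A}"
      using \<A>(3) by (auto simp: card_Suc_eq)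
    then show "\<exists>A\<in>F. supp x \<subseteq> A"
      using \<A>(1,2) by (auto simp: covers_def)
  next
    assume "\<exists>A\<in>F. supp x \<subseteq> A"
    then obtain A where "A \<in> F" "supp x \<subseteq> A"
      by blast
    then have "?P 1"
      by (intro exI[of _ "{A}"]) (auto simp: covers_def)
    then have "wtF F x \<le> 1"
      unfolding wtF_def by (rule Least_le)
    moreover have "\<A> \<noteq> {}"
      using \<A>(2) assms(2) by (auto simp: covers_def)
    then have "wtF F x \<noteq> 0"
      using \<A> assms(1) finite_subset by (metis card_0_eq)
    ultimately show "wtF F x = 1"
      by simp
  qed
qed

lemma eq_if_same_sets_below_members:
  assumes "\<forall>A. \<not> redundant F1 A" "\<forall>A. \<not> redundant F2 A"
    and "\<And>X. X \<in> F1 \<union> F2 \<Longrightarrow> (\<exists>A\<in>F1. X \<subseteq> A) \<longleftrightarrow> (\<exists>B\<in>F2. X \<subseteq> B)"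
  shows "F1 = F2"
proof -
  have "A \<in> G2"
    if A: "A \<in> G1" and nonred: "\<forall>A. \<not> redundant G1 A"
      and below': "\<And>X. X \<in> G1 \<union> G2 \<Longrightarrow> (\<exists>A\<in>G1. X \<subseteq> A) \<longleftrightarrow> (\<exists>B\<in>G2. X \<subseteq> B)"
    for A and G1 G2 :: "nat set set"
  proof -
    obtain B where "B \<in> G2" "A \<subseteq> B"
      using A below'[of A] by blast
    moreover obtain C where "C \<in> G1" "B \<subseteq> C"
      using below'[of B] \<open>B \<in> G2\<close> by blast
    moreover have "\<not> A \<subset> C"
      using A nonred \<open>C \<in> G1\<close> by (auto simp: redundant_def)
    ultimately have "A = B"
      by blast
    then show ?thesis
      using \<open>B \<in> G2\<close> by simp
  qed
  from this[of _ F1 F2] this[of _ F2 F1] show ?thesis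
    using assms by blast
qed

lemma empty_notin_covering:
  assumes "n \<ge> 1" "is_covering n F" "\<forall>A. \<not> redundant F A"
  shows "{} \<notin> F"
proof
  assume "{} \<in> F"
  obtain C where "C \<in> F" "1 \<in> C"
    using assms(1,2) by (auto simp: is_covering_def covers_def)
  then have "redundant F {}"
    using \<open>{} \<in> F\<close> by (auto simp: redundant_def)
  then show False
    using assms(3) by blast
qed

lemma finite_covering: "is_covering n F \<Longrightarrow> finite F"
  unfolding is_covering_def
  by (meson Pow_iff finite_Pow_iff finite_atLeastAtMost finite_subset subsetI)

lemma supp_indicator: "supp (indicator X :: nat \<Rightarrow> 'a::zero_neq_one) = X"
  by (auto simp: supp_def indicator_def)

lemma wtF_indicator_eq_1_iff:
  assumes "is_covering n F" "X \<subseteq> {1..n}" "X \<noteq> {}"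
  shows "wtF F (indicator X :: nat \<Rightarrow> 'a::zero_neq_one) = 1 \<longleftrightarrow> (\<exists>A\<in>F. X \<subseteq> A)"
proof -
  have "covers F X"
    using assms(1,2) by (auto simp: is_covering_def covers_def)
  then show ?thesis
    using wtF_eq_1_iff[OF finite_covering[OF assms(1)], of "indicator X"] assms(3)
    by (simp add: supp_indicator)
qed

theorem proposition2:
  fixes n :: nat and F1 F2 :: "nat set set"
  assumes "n \<ge> 1"
    and "is_covering n F1" and "is_covering n F2" and "F1 \<noteq> F2"
    and "\<forall>A. \<not> redundant F1 A" and "\<forall>A. \<not> redundant F2 A"
  shows "\<exists>x \<in> vecs n. \<exists>y \<in> vecs n.
           dF F1 x y \<noteq> dF F2 (x :: nat \<Rightarrow> 'a :: {finite, field}) y"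
proof (rule ccontr)
  assume "\<not> ?thesis"
  then have same_dF: "dF F1 x y = dF F2 x y" if "x \<in> vecs n" "y \<in> vecs n"
    for x y :: "nat \<Rightarrow> 'a"
    using that by blast
  have "(\<exists>A\<in>F1. X \<subseteq> A) \<longleftrightarrow> (\<exists>B\<in>F2. X \<subseteq> B)" if "X \<in> F1 \<union> F2" for X
  proof -
    have X: "X \<subseteq> {1..n}" "X \<noteq> {}"
      using that assms empty_notin_covering by (auto simp: is_covering_def)
    then have "(indicator X :: nat \<Rightarrow> 'a) \<in> vecs n"
      by (auto simp: vecs_def indicator_def)
    then have "wtF F1 (indicator X :: nat \<Rightarrow> 'a) = wtF F2 (indicator X :: nat \<Rightarrow> 'a)"
      using same_dF[of "indicator X" "\<lambda>_. 0"] by (simp add: dF_def vecs_def)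
    then show ?thesis
      using wtF_indicator_eq_1_iff[OF assms(2) X] wtF_indicator_eq_1_iff[OF assms(3) X]
      by (metis (no_types))
  qed
  then have "F1 = F2"
    using eq_if_same_sets_below_members assms(5,6) by blast
  with assms(4) show False
    by contradiction
qed

end
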